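(* Let $U=\sum_{j=0}^3c_j\sigma_j\otimes\sigma_j$ be a normalized two-qubit unitary with parameters $x,y,z$ and $c_2=c_3$, and write $E(\alpha,\beta):=E(\varphi(\alpha,\beta;\frac{\pi}{2},\frac{\pi}{2}))$. (i) $\max_{\alpha,\beta\in[0,\pi/2]}E(\alpha,\beta)=\max_{\alpha\in[0,\pi/4],\beta\in[0,\pi/2]}E(\alpha,\beta)=\max_{\alpha\in[0,\pi/2],\beta\in[0,\pi/4]}E(\alpha,\beta)$. (ii) Let $B=\{(\alpha,\beta)\in[0,\pi/4]\times[0,\pi/2]:\ \alpha\in\{0,\pi/4\}\text{ or }\beta\in\{0,\pi/4\}\}$. Then $$\max_{(\alpha,\beta)\in B}E(\alpha,\beta)=\begin{cases}\max\{1,E(\tfrac{\pi}{4},\tfrac{\pi}{4})\}, & \cos(2x+2y)\le0,\\ \max\{E(0,\tfrac{\pi}{2}),E(\tfrac{\pi}{4},\tfrac{\pi}{4})\}, & \cos(2x+2y)>0.\end{cases}$$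
   Context: Pauli matrices: $\sigma_0=I$, $\sigma_1=\begin{pmatrix}0&1\\1&0\end{pmatrix}$, $\sigma_2=\begin{pmatrix}0&-i\\i&0\end{pmatrix}$, $\sigma_3=\begin{pmatrix}1&0\\0&-1\end{pmatrix}$. For real $x,y,z$ set $c_0=\cos x\cos y\cos z+i\sin x\sin y\sin z$, $c_1=\cos x\sin y\sin z+i\sin x\cos y\cos z$, $c_2=\sin x\cos y\sin z+i\cos x\sin y\cos z$, $c_3=\sin x\sin y\cos z+i\cos x\cos y\sin z$, and $U=\sum_{j=0}^3c_j\sigma_j\otimes\sigma_j$ acting on qubits $A,B$. $U$ is called normalized if $\pi/4\ge x\ge y\ge z\ge0$ and $0<y<\pi/4$. $E(\varphi(\alpha,\beta;\frac{\pi}{2},\frac{\pi}{2}))$ denotes the entanglement entropy $S(\mathrm{Tr}_{AR_A}|\chi\rangle\langle\chi|)$ (von Neumann entropy, base-2 logarithm) of $|\chi\rangle=U\big((\cos\alpha|00\rangle+\sin\alpha|11\rangle)_{AR_A}\otimes(\cos\beta|00\rangle+\sin\beta|11\rangle)_{BR_B}\big)$, with $R_A,R_B$ qubits and $U$ acting on $A,B$. *)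

theory Defs
  imports Complex_Main "Jordan_Normal_Form.Char_Poly"
begin

(* Pauli matrices sigma_0..sigma_3; entries indexed by row r, column c in {0,1} *)
definition pauli :: "nat \<Rightarrow> nat \<Rightarrow> nat \<Rightarrow> complex" where
  "pauli j r c =
     (if j = 0 then (if r = c then 1 else 0)
      else if j = 1 then (if r \<noteq> c then 1 else 0)
      else if j = 2 then (if r = 0 \<and> c = 1 then - \<i> else if r = 1 \<and> c = 0 then \<i> else 0)
      else (if r = c then (if r = 0 then 1 else -1) else 0))"

definition coef :: "real \<Rightarrow> real \<Rightarrow> real \<Rightarrow> nat \<Rightarrow> complex" where
  "coef x y z j =
     (if j = 0 then Complex (cos x * cos y * cos z) (sin x * sin y * sin z)
      else if j = 1 then Complex (cos x * sin y * sin z) (sin x * cos y * cos z)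
      else if j = 2 then Complex (sin x * cos y * sin z) (cos x * sin y * cos z)
      else Complex (sin x * sin y * cos z) (cos x * cos y * sin z))"

(* matrix entry <a' b'| U |a b> of U = sum_j c_j sigma_j (x) sigma_j on qubits A,B *)
definition Uent :: "real \<Rightarrow> real \<Rightarrow> real \<Rightarrow> nat \<Rightarrow> nat \<Rightarrow> nat \<Rightarrow> nat \<Rightarrow> complex" where
  "Uent x y z a' b' a b = (\<Sum>j<4. coef x y z j * pauli j a' a * pauli j b' b)"

definition normalized :: "real \<Rightarrow> real \<Rightarrow> real \<Rightarrow> bool" where
  "normalized x y z \<longleftrightarrow> pi/4 \<ge> x \<and> x \<ge> y \<and> y \<ge> z \<and> z \<ge> 0 \<and> 0 < y \<and> y < pi/4"

(* amplitude <a ra| (cos t|00> + sin t|11>) *)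
definition pairamp :: "real \<Rightarrow> nat \<Rightarrow> nat \<Rightarrow> complex" where
  "pairamp t a r = (if a = r then (if a = 0 then complex_of_real (cos t) else complex_of_real (sin t)) else 0)"

(* amplitude <a ra b rb | chi>, chi = U_AB (psi_alpha_{A R_A} (x) psi_beta_{B R_B}) *)
definition chi :: "real \<Rightarrow> real \<Rightarrow> real \<Rightarrow> real \<Rightarrow> real \<Rightarrow> nat \<Rightarrow> nat \<Rightarrow> nat \<Rightarrow> nat \<Rightarrow> complex" where
  "chi x y z \<alpha> \<beta> a' ra b' rb =
     (\<Sum>a<2. \<Sum>b<2. Uent x y z a' b' a b * pairamp \<alpha> a ra * pairamp \<beta> b rb)"

(* reduced state Tr_{A R_A} |chi><chi| on B R_B, basis index 2*b + rb *)
definition rhoBR :: "real \<Rightarrow> real \<Rightarrow> real \<Rightarrow> real \<Rightarrow> real \<Rightarrow> complex mat" where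
  "rhoBR x y z \<alpha> \<beta> = mat 4 4 (\<lambda>(i, k).
     \<Sum>a<2. \<Sum>ra<2. chi x y z \<alpha> \<beta> a ra (i div 2) (i mod 2) * cnj (chi x y z \<alpha> \<beta> a ra (k div 2) (k mod 2)))"

definition eta :: "real \<Rightarrow> real" where
  "eta t = (if t \<le> 0 then 0 else - t * log 2 t)"

(* von Neumann entropy: sum over the eigenvalues (with algebraic multiplicity) of -lambda log2 lambda *)
definition vn_entropy :: "complex mat \<Rightarrow> real" where
  "vn_entropy \<rho> = (\<Sum>l\<in>{l. poly (char_poly \<rho>) l = 0}.
       of_nat (order l (char_poly \<rho>)) * eta (Re l))"

(* E(phi(alpha,beta; pi/2, pi/2)) *)
definition Ent :: "real \<Rightarrow> real \<Rightarrow> real \<Rightarrow> real \<Rightarrow> real \<Rightarrow> real" where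
  "Ent x y z \<alpha> \<beta> = vn_entropy (rhoBR x y z \<alpha> \<beta>)"

end

theory Submission
  imports Defs
begin

text \<open>The reduced state of \<open>U(\<psi>\<^sub>\<alpha> \<otimes> \<psi>\<^sub>\<beta>)\<close> on \<open>B R\<^sub>B\<close> is X-shaped: it only couples the basis
vectors 0 with 3 and 1 with 2. Its spectrum is therefore that of two Hermitian 2\<times>2 blocks, and the
entropy becomes an explicit function of \<open>cos\<^sup>2 \<alpha>\<close>, \<open>cos\<^sup>2 \<beta>\<close>, the weights \<open>P = cos\<^sup>2(x - y)\<close>,
\<open>R = cos\<^sup>2(x + y)\<close> and two block discriminants. This function is symmetric in \<open>\<alpha>, \<beta>\<close> and invariant
under \<open>(\<alpha>, \<beta>) \<mapsto> (\<pi>/2 - \<alpha>, \<pi>/2 - \<beta>)\<close>, which gives (i). On the edge \<open>\<alpha> = 0\<close> it is the binary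
entropy of \<open>P cos\<^sup>2 \<beta> + R sin\<^sup>2 \<beta>\<close>, a number between \<open>R\<close> and \<open>P \<ge> 1/2\<close>, so its maximum is 1 if
\<open>R \<le> 1/2\<close> (i.e. \<open>cos(2x + 2y) \<le> 0\<close>) and \<open>bin_entropy R\<close> otherwise. On the edge \<open>\<alpha> = \<pi>/4\<close> the block
determinants are proportional to \<open>cos\<^sup>2 \<beta> sin\<^sup>2 \<beta>\<close>, and the entropy of a block grows with its
determinant, so the maximum is at \<open>\<beta> = \<pi>/4\<close>.\<close>

lemma sum_lessThan_2: "(\<Sum>j<2::nat. f j) = f 0 + (f 1::'a::comm_monoid_add)"
  by (simp add: eval_nat_numeral)

lemma sum_lessThan_3: "(\<Sum>j<3::nat. f j) = f 0 + f 1 + (f 2::'a::comm_monoid_add)"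
  by (simp add: eval_nat_numeral add.assoc)

lemma sum_lessThan_4: "(\<Sum>j<4::nat. f j) = f 0 + f 1 + f 2 + (f 3::'a::comm_monoid_add)"
  by (simp add: eval_nat_numeral add.assoc)

lemma prod_lessThan_4: "(\<Prod>j<4::nat. f j) = f 0 * f 1 * f 2 * (f 3::'a::comm_monoid_mult)"
  by (simp add: eval_nat_numeral mult.assoc)

lemma det_2x2:
  assumes "(A :: 'a :: comm_ring_1 mat) \<in> carrier_mat 2 2"
  shows "det A = A $$ (0,0) * A $$ (1,1) - A $$ (1,0) * A $$ (0,1)"
  using laplace_expansion_column[OF assms, of 0] assms
  by (simp add: sum_lessThan_2 cofactor_def det_single mat_delete_carrier mat_delete_def)

lemma det_3x3:
  assumes "(A :: 'a :: comm_ring_1 mat) \<in> carrier_mat 3 3"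
  shows "det A = A $$ (0,0) * (A $$ (1,1) * A $$ (2,2) - A $$ (2,1) * A $$ (1,2))
               - A $$ (1,0) * (A $$ (0,1) * A $$ (2,2) - A $$ (2,1) * A $$ (0,2))
               + A $$ (2,0) * (A $$ (0,1) * A $$ (1,2) - A $$ (1,1) * A $$ (0,2))"
  using laplace_expansion_column[OF assms, of 0] assms
  by (simp add: sum_lessThan_3 cofactor_def det_2x2 mat_delete_carrier mat_delete_def
      numeral_2_eq_2 algebra_simps)

definition X_shaped :: "'a::zero mat \<Rightarrow> bool" where
  "X_shaped A \<longleftrightarrow> A \<in> carrier_mat 4 4 \<and>
     A $$ (0,1) = 0 \<and> A $$ (0,2) = 0 \<and> A $$ (1,0) = 0 \<and> A $$ (1,3) = 0 \<and>
     A $$ (2,0) = 0 \<and> A $$ (2,3) = 0 \<and> A $$ (3,1) = 0 \<and> A $$ (3,2) = 0"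

lemma det_X_shaped:
  assumes "X_shaped (A :: 'a :: comm_ring_1 mat)"
  shows "det A = (A $$ (0,0) * A $$ (3,3) - A $$ (0,3) * A $$ (3,0))
               * (A $$ (1,1) * A $$ (2,2) - A $$ (1,2) * A $$ (2,1))"
proof -
  have A: "A \<in> carrier_mat 4 4" using assms by (simp add: X_shaped_def)
  show ?thesis
    using laplace_expansion_column[OF A, of 0] A assms
    by (simp add: X_shaped_def sum_lessThan_4 cofactor_def det_3x3 mat_delete_carrier mat_delete_def
        numeral_2_eq_2 numeral_3_eq_3 algebra_simps)
qed

lemma char_poly_matrix_entry:
  assumes "A \<in> carrier_mat n n" "i < n" "j < n"
  shows "char_poly_matrix A $$ (i,j) = (if i = j then [:- A $$ (i,j), 1:] else [:- A $$ (i,j):])"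
  using assms by (auto simp: char_poly_matrix_def)

lemma X_shaped_char_poly_matrix:
  "X_shaped A \<Longrightarrow> X_shaped (char_poly_matrix A)"
  by (auto simp: X_shaped_def char_poly_matrix_entry)

lemma char_poly_X_shaped:
  assumes "X_shaped (A :: 'a :: comm_ring_1 mat)"
  shows "char_poly A = ([:- A $$ (0,0), 1:] * [:- A $$ (3,3), 1:] - [:A $$ (0,3) * A $$ (3,0):])
                     * ([:- A $$ (1,1), 1:] * [:- A $$ (2,2), 1:] - [:A $$ (1,2) * A $$ (2,1):])"
  using assms
  unfolding char_poly_def det_X_shaped[OF X_shaped_char_poly_matrix[OF assms]]
  by (auto simp: X_shaped_def char_poly_matrix_entry algebra_simps)

text \<open>A Hermitian 2\<times>2 block with trace \<open>2 m\<close> and determinant \<open>D\<close> has eigenvalues \<open>m \<plusminus> sqrt (m\<^sup>2 - D)\<close>.\<close>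

definition pair_entropy :: "real \<Rightarrow> real \<Rightarrow> real" where
  "pair_entropy m D = eta (m + sqrt (m^2 - D)) + eta (m - sqrt (m^2 - D))"

lemma order_linear_factor: "order a [:-b, 1:] = (if a = b then 1 else (0::nat))"
proof (cases "a = b")
  case True
  then show ?thesis using order_power_n_n[of b 1] by simp
next
  case False
  then show ?thesis by (simp add: order_0I)
qed

lemma order_prod_linear_factors:
  fixes L :: "nat \<Rightarrow> 'a::idom"
  shows "order l (\<Prod>i<n. [:-(L i), 1:]) = card {i. i < n \<and> L i = l}"
proof (induction n)
  case 0
  then show ?case by (simp add: order_0I)
next
  case (Suc n)
  have split: "{i. i < Suc n \<and> L i = l} = {i. i < n \<and> L i = l} \<union> (if L n = l then {n} else {})"
    by (auto simp: less_Suc_eq)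
  have "(\<Prod>i<n. [:-(L i), 1:]) \<noteq> 0"
    by (subst prod_zero_iff) auto
  then have "(\<Prod>i<n. [:-(L i), 1:]) * [:-(L n), 1:] \<noteq> 0"
    by (simp only: mult_eq_0_iff) simp
  then have "order l (\<Prod>i<Suc n. [:-(L i), 1:]) = order l (\<Prod>i<n. [:-(L i), 1:]) + order l [:-(L n), 1:]"
    by (simp only: prod.lessThan_Suc) (rule order_mult)
  then show ?case
    unfolding Suc split by (auto simp: order_linear_factor card_Un_disjoint)
qed

lemma roots_prod_linear_factors:
  fixes L :: "nat \<Rightarrow> 'a::idom"
  shows "{l. poly (\<Prod>i<n. [:-(L i), 1:]) l = 0} = L ` {..<n}"
  by (auto simp: poly_prod prod_zero_iff)

lemma vn_entropy_linear_factors: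
  fixes A :: "complex mat" and L :: "nat \<Rightarrow> complex"
  assumes "char_poly A = (\<Prod>i<n. [:-(L i), 1:])"
  shows "vn_entropy A = (\<Sum>i<n. eta (Re (L i)))"
proof -
  have "(\<Sum>i<n. eta (Re (L i))) = (\<Sum>l\<in>L ` {..<n}. \<Sum>i\<in>{i\<in>{..<n}. L i = l}. eta (Re (L i)))"
    by (rule sum.image_gen) simp
  also have "\<dots> = (\<Sum>l\<in>L ` {..<n}. of_nat (card {i. i < n \<and> L i = l}) * eta (Re l))"
    by (intro sum.cong refl) auto
  finally show ?thesis
    unfolding vn_entropy_def assms roots_prod_linear_factors by (simp add: order_prod_linear_factors)
qed

lemma hermitian_block_factor:
  fixes a d :: real and b :: complex
  defines "m \<equiv> (a + d) / 2" and "v \<equiv> sqrt (((a + d) / 2)^2 - (a * d - (cmod b)^2))"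
  shows "[:- complex_of_real a, 1:] * [:- complex_of_real d, 1:] - [:b * cnj b:]
       = [:- complex_of_real (m + v), 1:] * [:- complex_of_real (m - v), 1:]"
proof -
  have discr: "((a + d) / 2)^2 - (a * d - (cmod b)^2) = ((a - d) / 2)^2 + (cmod b)^2"
    by (simp add: power2_eq_square field_simps)
  have "0 \<le> ((a + d) / 2)^2 - (a * d - (cmod b)^2)"
    unfolding discr by simp
  then have "v^2 = m^2 - (a * d - (cmod b)^2)"
    unfolding v_def m_def by simp
  then have "(m + v) * (m - v) = a * d - (cmod b)^2"
    by (simp add: power2_eq_square algebra_simps)
  moreover have "b * cnj b = complex_of_real ((cmod b)^2)"
    using complex_norm_square[of b] by simp
  ultimately have prod: "complex_of_real (m + v) * complex_of_real (m - v)
      = complex_of_real a * complex_of_real d - b * cnj b"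
    by (metis of_real_diff of_real_mult)
  have "(m + v) + (m - v) = a + d"
    unfolding m_def by simp
  then have "complex_of_real (m + v) + complex_of_real (m - v) = complex_of_real a + complex_of_real d"
    by (metis of_real_add)
  with prod show ?thesis
    by (simp add: algebra_simps)
qed

lemma vn_entropy_X_shaped:
  fixes A :: "complex mat" and a1 d1 a2 d2 :: real
  assumes A: "X_shaped A"
    and diag: "A $$ (0,0) = a1" "A $$ (3,3) = d1" "A $$ (1,1) = a2" "A $$ (2,2) = d2"
    and herm: "A $$ (3,0) = cnj (A $$ (0,3))" "A $$ (2,1) = cnj (A $$ (1,2))"
  shows "vn_entropy A = pair_entropy ((a1 + d1) / 2) (a1 * d1 - (cmod (A $$ (0,3)))^2)
                      + pair_entropy ((a2 + d2) / 2) (a2 * d2 - (cmod (A $$ (1,2)))^2)"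
proof -
  define v1 where "v1 = sqrt (((a1 + d1) / 2)^2 - (a1 * d1 - (cmod (A $$ (0,3)))^2))"
  define v2 where "v2 = sqrt (((a2 + d2) / 2)^2 - (a2 * d2 - (cmod (A $$ (1,2)))^2))"
  define m1 where "m1 = (a1 + d1) / 2"
  define m2 where "m2 = (a2 + d2) / 2"
  define L where "L = (\<lambda>i::nat. complex_of_real ([m1 + v1, m1 - v1, m2 + v2, m2 - v2] ! i))"
  have L: "L 0 = complex_of_real (m1 + v1)" "L 1 = complex_of_real (m1 - v1)"
      "L (Suc 0) = complex_of_real (m1 - v1)" "L 2 = complex_of_real (m2 + v2)" "L 3 = complex_of_real (m2 - v2)"
    by (simp_all add: L_def numeral_3_eq_3)
  have "char_poly A = (\<Prod>i<4. [:- L i, 1:])"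
    unfolding char_poly_X_shaped[OF A] diag herm hermitian_block_factor prod_lessThan_4 L
      m1_def v1_def m2_def v2_def
    by (simp only: mult.assoc)
  then show ?thesis
    by (simp add: vn_entropy_linear_factors sum_lessThan_4 L pair_entropy_def m1_def v1_def m2_def v2_def)
qed

lemma eta_eq_ln: "t > 0 \<Longrightarrow> eta t = - t * ln t / ln 2"
  by (simp add: eta_def log_def)

lemma eta_0 [simp]: "eta 0 = 0"
  by (simp add: eta_def)

lemma eta_half: "eta (1/2) = 1/2"
  by (simp add: eta_def log_divide)

lemma eta_add_le:
  assumes "0 \<le> a" "0 \<le> b"
  shows "eta (a + b) \<le> eta a + eta b"
proof (cases "a = 0 \<or> b = 0")
  case True
  then show ?thesis using assms by auto
next
  case False
  with assms have a: "a > 0" and b: "b > 0" by auto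
  have "a * ln a + b * ln b \<le> a * ln (a + b) + b * ln (a + b)"
    using a b by (intro add_mono mult_left_mono) auto
  then have "- (a + b) * ln (a + b) / ln 2 \<le> (- a * ln a - b * ln b) / ln 2"
    by (intro divide_right_mono) (auto simp: algebra_simps)
  then show ?thesis
    using a b by (simp add: eta_eq_ln add_divide_distrib diff_divide_distrib)
qed

text \<open>The derivative in \<open>v\<close> is \<open>ln ((m - v) / (m + v)) / ln 2 \<le> 0\<close>; at the endpoint \<open>v' = m\<close>, where it
is singular, subadditivity of \<open>eta\<close> is used instead.\<close>

lemma eta_symmetric_pair_antimono:
  fixes m v v' :: real
  assumes "0 \<le> v" "v \<le> v'" "v' \<le> m"
  shows "eta (m + v') + eta (m - v') \<le> eta (m + v) + eta (m - v)"
proof (cases "v' = m")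
  case True
  then have "eta (m + v') + eta (m - v') = eta ((m + v) + (m - v))"
    by simp
  also have "\<dots> \<le> eta (m + v) + eta (m - v)"
    by (rule eta_add_le) (use assms in auto)
  finally show ?thesis .
next
  case False
  with assms have v'm: "v' < m" by simp
  define g where "g w = - (m + w) * ln (m + w) - (m - w) * ln (m - w)" for w
  have "g v' \<le> g v"
  proof (rule DERIV_nonpos_imp_nonincreasing[of v v' g])
    fix w assume w: "v \<le> w" "w \<le> v'"
    then have pos: "m + w > 0" "m - w > 0"
      using assms v'm by auto
    moreover have "(- m - w) / (m + w) = -1"
      using pos by (simp add: divide_eq_minus_1_iff)
    ultimately have "(g has_real_derivative (ln (m - w) - ln (m + w))) (at w)"
      unfolding g_def by (auto intro!: derivative_eq_intros)
    moreover have "ln (m - w) - ln (m + w) \<le> 0"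
      using pos w assms by simp
    ultimately show "\<exists>y. (g has_real_derivative y) (at w) \<and> y \<le> 0"
      by blast
  qed (use assms in simp)
  moreover have "eta (m + t) + eta (m - t) = g t / ln 2" if "m + t > 0" "m - t > 0" for t
    using that by (simp add: g_def eta_eq_ln field_simps)
  ultimately show ?thesis
    using assms v'm by (simp add: divide_right_mono)
qed

definition bin_entropy :: "real \<Rightarrow> real" where
  "bin_entropy t = eta t + eta (1 - t)"

lemma bin_entropy_half: "bin_entropy (1/2) = 1"
  by (simp add: bin_entropy_def eta_half)

lemma bin_entropy_le_1:
  assumes "0 \<le> t" "t \<le> 1"
  shows "bin_entropy t \<le> 1"
proof -
  have "eta (1/2 + \<bar>t - 1/2\<bar>) + eta (1/2 - \<bar>t - 1/2\<bar>) \<le> eta (1/2 + 0) + eta (1/2 - 0)"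
    by (rule eta_symmetric_pair_antimono) (use assms in \<open>auto simp: abs_if\<close>)
  moreover have "eta (1/2 + \<bar>t - 1/2\<bar>) + eta (1/2 - \<bar>t - 1/2\<bar>) = bin_entropy t"
    by (cases "t \<ge> 1/2") (auto simp: abs_if bin_entropy_def)
  ultimately show ?thesis
    by (simp add: eta_half)
qed

lemma bin_entropy_antimono:
  assumes "1/2 \<le> s" "s \<le> t" "t \<le> 1"
  shows "bin_entropy t \<le> bin_entropy s"
  using eta_symmetric_pair_antimono[of "s - 1/2" "t - 1/2" "1/2"] assms
  by (simp add: bin_entropy_def)

lemma pair_entropy_mono:
  assumes "0 \<le> m" "0 \<le> D" "D \<le> D'" "D' \<le> m^2"
  shows "pair_entropy m D \<le> pair_entropy m D'"
  unfolding pair_entropy_def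
proof (rule eta_symmetric_pair_antimono)
  show "sqrt (m^2 - D) \<le> m"
    using assms real_sqrt_le_mono[of "m^2 - D" "m^2"] by simp
qed (use assms in auto)

text \<open>\<open>P, R\<close> and \<open>Q, S\<close> are the squared moduli of \<open>c\<^sub>0 \<plusminus> c\<^sub>3\<close> and \<open>c\<^sub>1 \<mp> c\<^sub>2\<close>, and \<open>K1, K2\<close> the
discriminants of the two blocks of the reduced state (see \<open>Ent_eq_entropy_formula\<close>).\<close>

definition entropy_formula ::
    "real \<Rightarrow> real \<Rightarrow> real \<Rightarrow> real \<Rightarrow> real \<Rightarrow> real \<Rightarrow> real \<Rightarrow> real \<Rightarrow> real" where
  "entropy_formula P R Q S K1 K2 \<alpha> \<beta> =
     (let ca = (cos \<alpha>)^2; sa = (sin \<alpha>)^2; cb = (cos \<beta>)^2; sb = (sin \<beta>)^2 in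
      pair_entropy ((P * (ca*cb + sa*sb) + R * (sa*cb + ca*sb)) / 2) (ca*sa*cb*sb*K1)
    + pair_entropy ((Q * (sa*sb + ca*cb) + S * (ca*sb + sa*cb)) / 2) (ca*sa*cb*sb*K2))"

lemma entropy_formula_swap:
  "entropy_formula P R Q S K1 K2 \<alpha> \<beta> = entropy_formula P R Q S K1 K2 \<beta> \<alpha>"
  unfolding entropy_formula_def Let_def by (simp add: ac_simps)

lemma entropy_formula_reflect:
  "entropy_formula P R Q S K1 K2 \<alpha> \<beta> = entropy_formula P R Q S K1 K2 (pi/2 - \<alpha>) (pi/2 - \<beta>)"
  unfolding entropy_formula_def Let_def by (simp add: cos_diff sin_diff ac_simps)

lemma entropy_formula_left_0:
  assumes "0 \<le> P" "P \<le> 1" "0 \<le> R" "R \<le> 1"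
  shows "entropy_formula P R (1 - P) (1 - R) K1 K2 0 \<beta>
       = bin_entropy (P * (cos \<beta>)^2 + R * (sin \<beta>)^2)"
proof -
  have s: "(sin \<beta>)^2 = 1 - (cos \<beta>)^2"
    by (simp add: sin_squared_eq)
  have "P * (cos \<beta>)^2 \<le> (cos \<beta>)^2" "R * (sin \<beta>)^2 \<le> (sin \<beta>)^2"
    using assms by (simp_all add: mult_left_le_one_le)
  then have "P * (cos \<beta>)^2 + R * (sin \<beta>)^2 \<le> 1"
    using s by simp
  moreover have "(1 - P) * (cos \<beta>)^2 + (1 - R) * (sin \<beta>)^2 = 1 - (P * (cos \<beta>)^2 + R * (sin \<beta>)^2)"
    unfolding s by (simp add: algebra_simps)
  ultimately show ?thesis
    using assms by (simp add: entropy_formula_def pair_entropy_def bin_entropy_def Let_def)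
qed

lemma entropy_formula_quarter_le:
  assumes "0 \<le> P + R" "0 \<le> Q + S" "0 \<le> K1" "0 \<le> K2" "K1 \<le> (P + R)^2" "K2 \<le> (Q + S)^2"
  shows "entropy_formula P R Q S K1 K2 (pi/4) \<beta> \<le> entropy_formula P R Q S K1 K2 (pi/4) (pi/4)"
proof -
  have quarter: "(cos (pi/4))^2 = (1/2::real)" "(sin (pi/4))^2 = (1/2::real)"
    by (simp_all add: cos_45 sin_45 power_divide)
  have s: "(sin b)^2 = 1 - (cos b)^2" for b :: real
    by (simp add: sin_squared_eq)
  have F: "entropy_formula P R Q S K1 K2 (pi/4) b
      = pair_entropy ((P + R) / 4) ((cos b)^2 * (sin b)^2 * K1 / 4)
      + pair_entropy ((Q + S) / 4) ((cos b)^2 * (sin b)^2 * K2 / 4)" for b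
    unfolding entropy_formula_def Let_def quarter s by (simp add: field_simps)
  have "(cos \<beta>)^2 * (sin \<beta>)^2 \<le> 1/4"
    using zero_le_power2[of "(cos \<beta>)^2 - 1/2"] unfolding s by (simp add: power2_eq_square algebra_simps)
  then have "(cos \<beta>)^2 * (sin \<beta>)^2 * K / 4 \<le> 1/4 * K / 4" if "0 \<le> K" for K
    using that by (intro divide_right_mono mult_right_mono) auto
  from this[of K1] this[of K2] show ?thesis
    unfolding F quarter using assms
    by (intro add_mono pair_entropy_mono) (auto simp: power_divide)
qed

lemma bin_entropy_mixture_le:
  assumes "0 \<le> R" "R \<le> P" "P \<le> 1" "1/2 \<le> P"
  shows "bin_entropy (P * (cos \<beta>)^2 + R * (sin \<beta>)^2) \<le> (if R \<le> 1/2 then 1 else bin_entropy R)"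
proof -
  let ?t = "P * (cos \<beta>)^2 + R * (sin \<beta>)^2"
  have s: "(sin \<beta>)^2 = 1 - (cos \<beta>)^2"
    by (simp add: sin_squared_eq)
  have c: "0 \<le> (cos \<beta>)^2" "(cos \<beta>)^2 \<le> 1"
    by (simp_all add: abs_square_le_1)
  have "R * (cos \<beta>)^2 \<le> P * (cos \<beta>)^2"
    using assms c by (simp add: mult_right_mono)
  then have "R \<le> ?t"
    unfolding s by (simp add: algebra_simps)
  moreover have "P * (cos \<beta>)^2 \<le> (cos \<beta>)^2" "R * (1 - (cos \<beta>)^2) \<le> 1 - (cos \<beta>)^2"
    using assms c by (simp_all add: mult_left_le_one_le)
  then have "?t \<le> 1"
    unfolding s by simp
  ultimately show ?thesis
    using assms bin_entropy_le_1[of ?t] bin_entropy_antimono[of R ?t] by auto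
qed

lemma bin_entropy_mixture_attains_1:
  assumes "R \<le> 1/2" "1/2 \<le> P"
  obtains \<beta> where "0 \<le> \<beta>" "\<beta> \<le> pi/2" "bin_entropy (P * (cos \<beta>)^2 + R * (sin \<beta>)^2) = 1"
proof -
  have "\<exists>\<beta>. 0 \<le> \<beta> \<and> \<beta> \<le> pi/2 \<and> (\<lambda>b. P * (cos b)^2 + R * (sin b)^2) \<beta> = 1/2"
    by (rule IVT2) (use assms in \<open>auto intro!: continuous_intros\<close>)
  then obtain \<beta> where "0 \<le> \<beta>" "\<beta> \<le> pi/2" "P * (cos \<beta>)^2 + R * (sin \<beta>)^2 = 1/2"
    by auto
  with that show ?thesis
    by (metis bin_entropy_half)
qed

lemma image_eq_by_folding:
  assumes "A \<subseteq> S" and fold: "\<And>p. p \<in> S \<Longrightarrow> p \<notin> A \<Longrightarrow> g p \<in> A \<and> f (g p) = f p"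
  shows "f ` S = f ` A"
proof
  show "f ` S \<subseteq> f ` A"
  proof
    fix v assume "v \<in> f ` S"
    then obtain p where "p \<in> S" "v = f p"
      by auto
    then show "v \<in> f ` A"
      using fold[of p] by (cases "p \<in> A") (auto intro: image_eqI[of _ _ "g p"])
  qed
qed (use assms in auto)

lemma entropy_formula_boundary_le:
  fixes P R K1 K2 :: real
  defines "F \<equiv> entropy_formula P R (1 - P) (1 - R) K1 K2"
  assumes R: "0 \<le> R" "R \<le> P" and P: "1/2 \<le> P" "P \<le> 1"
    and K: "0 \<le> K1" "K1 \<le> (P + R)^2" "0 \<le> K2" "K2 \<le> ((1 - P) + (1 - R))^2"
    and boundary: "\<alpha> = 0 \<or> \<alpha> = pi/4 \<or> \<beta> = 0 \<or> \<beta> = pi/4"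
  shows "F \<alpha> \<beta> \<le> max (if R \<le> 1/2 then 1 else F 0 (pi/2)) (F (pi/4) (pi/4))"
    (is "_ \<le> max ?M0 _")
proof -
  have edge_le: "F 0 b \<le> ?M0" for b
  proof -
    have "F 0 b = bin_entropy (P * (cos b)^2 + R * (sin b)^2)" for b
      unfolding F_def by (rule entropy_formula_left_0) (use R P in auto)
    then show ?thesis
      using bin_entropy_mixture_le[of R P b] R P by (simp split: if_splits)
  qed
  have quarter_le: "F (pi/4) b \<le> F (pi/4) (pi/4)" for b
    unfolding F_def by (rule entropy_formula_quarter_le) (use R P K in auto)
  have swap: "F a b = F b a" for a b
    unfolding F_def by (rule entropy_formula_swap)
  from boundary consider "\<alpha> = 0" | "\<alpha> = pi/4" | "\<beta> = 0" | "\<beta> = pi/4"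
    by blast
  then show ?thesis
  proof cases
    case 1
    have "F \<alpha> \<beta> \<le> ?M0" unfolding 1 by (rule edge_le)
    then show ?thesis by (rule max.coboundedI1)
  next
    case 2
    have "F \<alpha> \<beta> \<le> F (pi/4) (pi/4)" unfolding 2 by (rule quarter_le)
    then show ?thesis by (rule max.coboundedI2)
  next
    case 3
    have "F \<alpha> \<beta> \<le> ?M0" unfolding 3 swap[of \<alpha>] by (rule edge_le)
    then show ?thesis by (rule max.coboundedI1)
  next
    case 4
    have "F \<alpha> \<beta> \<le> F (pi/4) (pi/4)" unfolding 4 swap[of \<alpha>] by (rule quarter_le)
    then show ?thesis by (rule max.coboundedI2)
  qed
qed

lemma Sup_entropy_formula_boundary:
  fixes P R K1 K2 :: real
  defines "F \<equiv> entropy_formula P R (1 - P) (1 - R) K1 K2"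
  assumes R: "0 \<le> R" "R \<le> P" and P: "1/2 \<le> P" "P \<le> 1"
    and K: "0 \<le> K1" "K1 \<le> (P + R)^2" "0 \<le> K2" "K2 \<le> ((1 - P) + (1 - R))^2"
  shows "(SUP p\<in>{p \<in> {0..pi/4} \<times> {0..pi/2}. fst p \<in> {0, pi/4} \<or> snd p \<in> {0, pi/4}}.
            F (fst p) (snd p))
       = max (if R \<le> 1/2 then 1 else F 0 (pi/2)) (F (pi/4) (pi/4))"
    (is "Sup (?F ` ?B) = max ?M0 _")
proof (rule cSup_eq_maximum)
  show "v \<le> max ?M0 (F (pi/4) (pi/4))" if "v \<in> ?F ` ?B" for v
    using that entropy_formula_boundary_le[OF R P K] unfolding F_def by auto
  show "max ?M0 (F (pi/4) (pi/4)) \<in> ?F ` ?B"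
  proof (cases "?M0 \<le> F (pi/4) (pi/4)")
    case True
    then show ?thesis
      by (intro image_eqI[of _ _ "(pi/4, pi/4)"]) auto
  next
    case M0_max: False
    have edge: "F 0 b = bin_entropy (P * (cos b)^2 + R * (sin b)^2)" for b
      unfolding F_def by (rule entropy_formula_left_0) (use R P in auto)
    show ?thesis
    proof (cases "R \<le> 1/2")
      case True
      then obtain \<beta> where "0 \<le> \<beta>" "\<beta> \<le> pi/2" "F 0 \<beta> = 1"
        using bin_entropy_mixture_attains_1[OF _ P(1)] edge by metis
      with M0_max True show ?thesis
        by (intro image_eqI[of _ _ "(0, \<beta>)"]) auto
    next
      case False
      with M0_max show ?thesis
        by (intro image_eqI[of _ _ "(0, pi/2)"]) auto
    qed
  qed
qed

definition block_disc :: "complex \<Rightarrow> complex \<Rightarrow> real" where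
  "block_disc p r = ((cmod p)^2 - (cmod r)^2)^2 + 4 * (Im (p * cnj r))^2"

lemma block_disc_nonneg: "0 \<le> block_disc p r"
  by (simp add: block_disc_def)

lemma block_disc_le: "block_disc p r \<le> ((cmod p)^2 + (cmod r)^2)^2"
proof -
  have "(cmod p)^2 * (cmod r)^2 = (Re (p * cnj r))^2 + (Im (p * cnj r))^2"
    unfolding cmod_power2 by (simp add: power2_eq_square algebra_simps)
  then have "((cmod p)^2 + (cmod r)^2)^2 - block_disc p r = 4 * (Re (p * cnj r))^2"
    by (simp add: block_disc_def power2_eq_square algebra_simps)
  then show ?thesis
    using zero_le_power2[of "Re (p * cnj r)"] by linarith
qed

lemma hermitian_block_det:
  fixes p r :: complex and A B c1 c2 c :: real
  assumes "c^2 = c1 * c2"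
  shows "c1 * ((cmod p)^2 * A + (cmod r)^2 * B) * (c2 * ((cmod r)^2 * A + (cmod p)^2 * B))
       - (cmod (complex_of_real c * (p * cnj r * complex_of_real A + r * cnj p * complex_of_real B)))^2
       = A * B * c1 * c2 * block_disc p r"
proof -
  have scale: "(cmod (complex_of_real c * w))^2 = c1 * c2 * (cmod w)^2" for w
    using assms by (simp add: norm_mult power_mult_distrib)
  show ?thesis
    unfolding block_disc_def scale unfolding cmod_power2 by (simp add: power2_eq_square algebra_simps)
qed

definition c03p :: "real \<Rightarrow> real \<Rightarrow> real \<Rightarrow> complex" where
  "c03p x y z = coef x y z 0 + coef x y z 3"

definition c03m :: "real \<Rightarrow> real \<Rightarrow> real \<Rightarrow> complex" where
  "c03m x y z = coef x y z 0 - coef x y z 3"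

definition c12m :: "real \<Rightarrow> real \<Rightarrow> real \<Rightarrow> complex" where
  "c12m x y z = coef x y z 1 - coef x y z 2"

definition c12p :: "real \<Rightarrow> real \<Rightarrow> real \<Rightarrow> complex" where
  "c12p x y z = coef x y z 1 + coef x y z 2"

lemma of_real_cmod_power2: "(complex_of_real (cmod w))^2 = w * cnj w"
  using complex_norm_square[of w] by simp

lemmas rhoBR_simps = rhoBR_def chi_def Uent_def sum_lessThan_4 sum_lessThan_2 pauli_def pairamp_def
  c03p_def c03m_def c12m_def c12p_def of_real_cmod_power2

lemma rhoBR_X_shaped: "X_shaped (rhoBR x y z \<alpha> \<beta>)"
  by (simp add: X_shaped_def rhoBR_simps)

lemma rhoBR_hermitian:
  "rhoBR x y z \<alpha> \<beta> $$ (3,0) = cnj (rhoBR x y z \<alpha> \<beta> $$ (0,3))"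
  "rhoBR x y z \<alpha> \<beta> $$ (2,1) = cnj (rhoBR x y z \<alpha> \<beta> $$ (1,2))"
  by (simp_all add: rhoBR_simps)

lemma rhoBR_diag:
  "rhoBR x y z \<alpha> \<beta> $$ (0,0) = complex_of_real
     ((cos \<beta>)^2 * ((cmod (c03p x y z))^2 * (cos \<alpha>)^2 + (cmod (c03m x y z))^2 * (sin \<alpha>)^2))"
  "rhoBR x y z \<alpha> \<beta> $$ (3,3) = complex_of_real
     ((sin \<beta>)^2 * ((cmod (c03m x y z))^2 * (cos \<alpha>)^2 + (cmod (c03p x y z))^2 * (sin \<alpha>)^2))"
  "rhoBR x y z \<alpha> \<beta> $$ (1,1) = complex_of_real
     ((sin \<beta>)^2 * ((cmod (c12p x y z))^2 * (cos \<alpha>)^2 + (cmod (c12m x y z))^2 * (sin \<alpha>)^2))"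
  "rhoBR x y z \<alpha> \<beta> $$ (2,2) = complex_of_real
     ((cos \<beta>)^2 * ((cmod (c12m x y z))^2 * (cos \<alpha>)^2 + (cmod (c12p x y z))^2 * (sin \<alpha>)^2))"
  by (simp_all add: rhoBR_simps, simp_all add: power2_eq_square algebra_simps)

lemma rhoBR_offdiag:
  "rhoBR x y z \<alpha> \<beta> $$ (0,3) = complex_of_real (cos \<beta> * sin \<beta>) *
     (c03p x y z * cnj (c03m x y z) * complex_of_real ((cos \<alpha>)^2)
      + c03m x y z * cnj (c03p x y z) * complex_of_real ((sin \<alpha>)^2))"
  "rhoBR x y z \<alpha> \<beta> $$ (1,2) = complex_of_real (cos \<beta> * sin \<beta>) *
     (c12p x y z * cnj (c12m x y z) * complex_of_real ((cos \<alpha>)^2)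
      + c12m x y z * cnj (c12p x y z) * complex_of_real ((sin \<alpha>)^2))"
  by (simp_all add: rhoBR_simps, simp_all add: power2_eq_square algebra_simps)

lemma Ent_eq_entropy_formula:
  "Ent x y z \<alpha> \<beta> = entropy_formula
     ((cmod (c03p x y z))^2) ((cmod (c03m x y z))^2) ((cmod (c12m x y z))^2) ((cmod (c12p x y z))^2)
     (block_disc (c03p x y z) (c03m x y z)) (block_disc (c12p x y z) (c12m x y z)) \<alpha> \<beta>"
proof -
  have c: "(cos \<beta> * sin \<beta>)^2 = (cos \<beta>)^2 * (sin \<beta>)^2" "(cos \<beta> * sin \<beta>)^2 = (sin \<beta>)^2 * (cos \<beta>)^2"
    by (simp_all add: power_mult_distrib)
  show ?thesis
    unfolding Ent_def vn_entropy_X_shaped[OF rhoBR_X_shaped rhoBR_diag rhoBR_hermitian]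
    unfolding rhoBR_offdiag hermitian_block_det[OF c(1)] hermitian_block_det[OF c(2)]
    by (simp add: entropy_formula_def Let_def algebra_simps)
qed

lemma sum_sq_scaled: "c^2 + s^2 = 1 \<Longrightarrow> (a * c)^2 + (a * s)^2 = (a::real)^2"
  by (simp add: power_mult_distrib distrib_left[symmetric])

lemma cmod_c03p: "(cmod (c03p x y z))^2 = (cos (x - y))^2"
proof -
  have "Re (c03p x y z) = cos (x - y) * cos z" "Im (c03p x y z) = cos (x - y) * sin z"
    by (simp_all add: c03p_def coef_def cos_diff algebra_simps)
  then show ?thesis
    by (simp add: cmod_power2 sum_sq_scaled)
qed

lemma cmod_c03m: "(cmod (c03m x y z))^2 = (cos (x + y))^2"
proof -
  have "Re (c03m x y z) = cos (x + y) * cos z" "Im (c03m x y z) = cos (x + y) * (- sin z)"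
    by (simp_all add: c03m_def coef_def cos_add algebra_simps)
  then show ?thesis
    by (simp add: cmod_power2 sum_sq_scaled)
qed

lemma cmod_c12m: "(cmod (c12m x y z))^2 = 1 - (cos (x - y))^2"
proof -
  have "Re (c12m x y z) = sin (x - y) * (- sin z)" "Im (c12m x y z) = sin (x - y) * cos z"
    by (simp_all add: c12m_def coef_def sin_diff algebra_simps)
  then show ?thesis
    by (simp add: cmod_power2 sum_sq_scaled sin_squared_eq)
qed

lemma cmod_c12p: "(cmod (c12p x y z))^2 = 1 - (cos (x + y))^2"
proof -
  have "Re (c12p x y z) = sin (x + y) * sin z" "Im (c12p x y z) = sin (x + y) * cos z"
    by (simp_all add: c12p_def coef_def sin_add algebra_simps)
  then show ?thesis
    by (simp add: cmod_power2 sum_sq_scaled sin_squared_eq)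
qed

lemma image_square_eq_halves:
  fixes f :: "real \<Rightarrow> real \<Rightarrow> real"
  assumes reflect: "\<And>\<alpha> \<beta>. f \<alpha> \<beta> = f (pi/2 - \<alpha>) (pi/2 - \<beta>)"
  defines "F \<equiv> \<lambda>p. f (fst p) (snd p)"
  shows "F ` ({0..pi/2} \<times> {0..pi/2}) = F ` ({0..pi/4} \<times> {0..pi/2})"
    and "F ` ({0..pi/2} \<times> {0..pi/2}) = F ` ({0..pi/2} \<times> {0..pi/4})"
  by (rule image_eq_by_folding[where g = "\<lambda>(\<alpha>, \<beta>). (pi/2 - \<alpha>, pi/2 - \<beta>)"];
      auto simp: F_def reflect[symmetric])+

lemma normalized_weights:
  assumes "normalized x y z"
  shows "1/2 \<le> (cos (x - y))^2" "(cos (x + y))^2 \<le> (cos (x - y))^2"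
proof -
  have xy: "0 \<le> y" "y \<le> x" "x \<le> pi/4"
    using assms unfolding normalized_def by auto
  have "0 \<le> cos (2 * (x - y))"
    by (rule cos_ge_zero) (use xy in auto)
  then show "1/2 \<le> (cos (x - y))^2"
    unfolding cos_double_cos by simp
  have "cos (2 * (x + y)) \<le> cos (2 * (x - y))"
    by (rule cos_monotone_0_pi_le) (use xy in auto)
  then show "(cos (x + y))^2 \<le> (cos (x - y))^2"
    unfolding cos_double_cos by simp
qed

theorem lemma4:
  fixes x y z :: real
  assumes "normalized x y z"
    and "coef x y z 2 = coef x y z 3"
  shows "(SUP p\<in>{0..pi/2} \<times> {0..pi/2}. Ent x y z (fst p) (snd p))
           = (SUP p\<in>{0..pi/4} \<times> {0..pi/2}. Ent x y z (fst p) (snd p))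
       \<and> (SUP p\<in>{0..pi/2} \<times> {0..pi/2}. Ent x y z (fst p) (snd p))
           = (SUP p\<in>{0..pi/2} \<times> {0..pi/4}. Ent x y z (fst p) (snd p))
       \<and> (SUP p\<in>{p \<in> {0..pi/4} \<times> {0..pi/2}. fst p \<in> {0, pi/4} \<or> snd p \<in> {0, pi/4}}.
             Ent x y z (fst p) (snd p))
           = (if cos (2*x + 2*y) \<le> 0
              then max 1 (Ent x y z (pi/4) (pi/4))
              else max (Ent x y z 0 (pi/2)) (Ent x y z (pi/4) (pi/4)))"
proof -
  define P where "P = (cos (x - y))^2"
  define R where "R = (cos (x + y))^2"
  have Ent: "Ent x y z = entropy_formula P R (1 - P) (1 - R)
      (block_disc (c03p x y z) (c03m x y z)) (block_disc (c12p x y z) (c12m x y z))"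
    by (intro ext) (simp add: Ent_eq_entropy_formula P_def R_def cmod_c03p cmod_c03m cmod_c12m cmod_c12p)
  have K1: "block_disc (c03p x y z) (c03m x y z) \<le> (P + R)^2"
    using block_disc_le[of "c03p x y z" "c03m x y z"] by (simp add: P_def R_def cmod_c03p cmod_c03m)
  have K2: "block_disc (c12p x y z) (c12m x y z) \<le> ((1 - P) + (1 - R))^2"
    using block_disc_le[of "c12p x y z" "c12m x y z"]
    by (simp add: P_def R_def cmod_c12p cmod_c12m add.commute)
  have boundary: "(SUP p\<in>{p \<in> {0..pi/4} \<times> {0..pi/2}. fst p \<in> {0, pi/4} \<or> snd p \<in> {0, pi/4}}.
             Ent x y z (fst p) (snd p))
      = max (if R \<le> 1/2 then 1 else Ent x y z 0 (pi/2)) (Ent x y z (pi/4) (pi/4))"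
    unfolding Ent
    using normalized_weights[OF assms(1)] block_disc_nonneg K1 K2
    by (intro Sup_entropy_formula_boundary) (auto simp: P_def R_def abs_square_le_1)
  have "cos (2*x + 2*y) = 2 * R - 1"
    unfolding R_def distrib_left[symmetric] by (rule cos_double_cos)
  then have "cos (2*x + 2*y) \<le> 0 \<longleftrightarrow> R \<le> 1/2"
    by linarith
  with boundary show ?thesis
    using image_square_eq_halves[of "Ent x y z"] entropy_formula_reflect unfolding Ent
    by auto
qed

end
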